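(* Let $a,b\in\mathbb{H}$ with $b\in C_a$, and let $P\in\mathbb{H}[q_1,q_2]$ vanish at $(a,b)$. Let $P_{q_2}$ be the partial Cullen derivative of $P$ with respect to $q_2$. If the multiplicity $n$ of the zero $\mathbb{H}\times\{b\}$ of $P$ satisfies $n\ge2$, then ${\rm Res}(P,P_{q_2};q_2)\equiv0$.
   Context: $\mathbb{H}$ denotes the quaternions; for $a\in\mathbb{H}$, $C_a=\{q\in\mathbb{H}: qa=aq\}$. A slice regular polynomial in two quaternionic variables is a function $\mathbb{H}^2\to\mathbb{H}$ of the form $P(q_1,q_2)=\sum_{n=0}^{N}\sum_{m=0}^{M}q_1^nq_2^ma_{n,m}$ with $a_{n,m}\in\mathbb{H}$ (coefficients on the right); the set of these is $\mathbb{H}[q_1,q_2]$, and $\mathbb{H}[q]$ denotes one-variable polynomials $\sum q^na_n$. The $*$-product is $\big(\sum q_1^nq_2^ma_{n,m}\big)*\big(\sum q_1^nq_2^mb_{n,m}\big)=\sum_{n,m}q_1^nq_2^m\sum_{r\le n,s\le m}a_{r,s}b_{n-r,m-s}$; $(q_2-b)^{*n}$ is the $n$-fold $*$-power. The partial Cullen derivative is $P_{q_2}=\sum_{m\ge1}mq_1^{n}q_2^{m-1}a_{n,m}$. Multiplicity: if $P$ vanishes on $\mathbb{H}\times\{b\}$, its multiplicity there is $n\in\mathbb N$ such that $P=(q_2-b)^{*n}*S$ with $S\in\mathbb{H}[q_1,q_2]$ not vanishing identically on $\mathbb{H}\times\{b\}$. Regular resultant: $(\mathbb{H}[q],+,*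 )$ is an Ore domain with skew field of quotients $\mathcal L$; ${\rm Det}^*_N$ is the Dieudonné determinant of $N\times N$ matrices over $\mathcal L$ (the unique homomorphism $GL(N,\mathcal L)\to$ abelianization of $\mathcal L^\times$ sending ${\rm diag}(\lambda_i)$ to the class of $\lambda_1*\cdots*\lambda_N$, set to $0$ on singular matrices), whose value on matrices over $\mathbb{H}[q]$ is identified with a polynomial representative. Writing $P=\sum_{k=0}^rq_2^k*\tilde P_k(q_1)$, $Q=\sum_{k=0}^sq_2^k*\tilde Q_k(q_1)$ with $\tilde P_k,\tilde Q_k\in\mathbb{H}[q_1]$, ${\rm Res}(P,Q;q_2)={\rm Det}^*_{r+s}(B(q_1))$, where $B(q_1)$ is the $(r+s)\times(r+s)$ Sylvester matrix whose $j$-th column ($1\le j\le s$) has $\tilde P_0,\dots,\tilde P_r$ in rows $j,\dots,j+r$, whose $(s+j)$-th column ($1\le j\le r$) has $\tilde Q_0,\dots,\tilde Q_s$ in rows $j,\dots,j+s$, and zeros elsewhere. "${\rm Res}\equiv0$" means it is zero. *)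

theory Defs
  imports Complex_Main
begin

datatype quat = Quat (qRe: real) (qI: real) (qJ: real) (qK: real)

instantiation quat :: ring_1
begin
definition "0 = Quat 0 0 0 0"
definition "1 = Quat 1 0 0 0"
definition "x + y = Quat (qRe x + qRe y) (qI x + qI y) (qJ x + qJ y) (qK x + qK y)"
definition "x - y = Quat (qRe x - qRe y) (qI x - qI y) (qJ x - qJ y) (qK x - qK y)"
definition "- x = Quat (- qRe x) (- qI x) (- qJ x) (- qK x)"
definition "x * y = Quat
   (qRe x * qRe y - qI x * qI y - qJ x * qJ y - qK x * qK y)
   (qRe x * qI y + qI x * qRe y + qJ x * qK y - qK x * qJ y)
   (qRe x * qJ y - qI x * qK y + qJ x * qRe y + qK x * qI y)
   (qRe x * qK y + qI x * qJ y - qJ x * qI y + qK x * qRe y)"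
instance
  by standard (simp_all add: zero_quat_def one_quat_def plus_quat_def minus_quat_def
      uminus_quat_def times_quat_def algebra_simps)
end

definition centralizer :: "quat \<Rightarrow> quat set" where
  "centralizer a = {q. q * a = a * q}"

text \<open>A polynomial \<open>\<Sum> q^n a_n\<close> is represented by its coefficient function (finite support).\<close>
type_synonym qpoly = "nat \<Rightarrow> quat"

definition qpolys :: "qpoly set" where
  "qpolys = {f. finite {n. f n \<noteq> 0}}"

definition qp_add :: "qpoly \<Rightarrow> qpoly \<Rightarrow> qpoly" where
  "qp_add f g = (\<lambda>n. f n + g n)"

definition qp_star :: "qpoly \<Rightarrow> qpoly \<Rightarrow> qpoly" where
  "qp_star f g = (\<lambda>n. \<Sum>k\<le>n. f k * g (n - k))"

definition qp_one :: qpoly where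
  "qp_one = (\<lambda>n. if n = 0 then 1 else 0)"

text \<open>\<open>\<phi>\<close> embeds \<open>(\<bbbH>[q],+,*)\<close> into the division ring \<open>'L\<close> as a skew field of (right)
  quotients: an injective unital ring homomorphism such that every element of \<open>'L\<close> is
  \<open>\<phi> a \<cdot> (\<phi> b)\<^sup>-\<^sup>1\<close> with \<open>b \<noteq> 0\<close>.\<close>
definition is_quotient_skew_field :: "(qpoly \<Rightarrow> 'L::division_ring) \<Rightarrow> bool" where
  "is_quotient_skew_field \<phi> \<longleftrightarrow>
     inj_on \<phi> qpolys \<and>
     \<phi> qp_one = 1 \<and>
     (\<forall>f\<in>qpolys. \<forall>g\<in>qpolys. \<phi> (qp_add f g) = \<phi> f + \<phi> g) \<and>
     (\<forall>f\<in>qpolys. \<forall>g\<in>qpolys. \<phi> (qp_star f g) = \<phi> f * \<phi> g) \<and>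
     (\<forall>x. \<exists>a\<in>qpolys. \<exists>b\<in>qpolys. b \<noteq> (\<lambda>_. 0) \<and> x = \<phi> a * inverse (\<phi> b))"

definition mat_invertible :: "nat \<Rightarrow> (nat \<Rightarrow> nat \<Rightarrow> 'L::ring_1) \<Rightarrow> bool" where
  "mat_invertible N M \<longleftrightarrow> (\<exists>C.
     (\<forall>i<N. \<forall>k<N. (\<Sum>j<N. M i j * C j k) = (if i = k then 1 else 0)) \<and>
     (\<forall>i<N. \<forall>k<N. (\<Sum>j<N. C i j * M j k) = (if i = k then 1 else 0)))"

text \<open>\<open>P n m\<close> is the coefficient \<open>a_{n,m}\<close> of \<open>q\<^sub>1^n q\<^sub>2^m\<close>.\<close>
type_synonym qpoly2 = "nat \<Rightarrow> nat \<Rightarrow> quat"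

definition qpolys2 :: "qpoly2 set" where
  "qpolys2 = {P. finite {(n, m). P n m \<noteq> 0}}"

definition qeval2 :: "qpoly2 \<Rightarrow> quat \<Rightarrow> quat \<Rightarrow> quat" where
  "qeval2 P x y = (\<Sum>(n, m)\<in>{(n, m). P n m \<noteq> 0}. x ^ n * y ^ m * P n m)"

definition qp2_star :: "qpoly2 \<Rightarrow> qpoly2 \<Rightarrow> qpoly2" where
  "qp2_star P Q = (\<lambda>n m. \<Sum>r\<le>n. \<Sum>s\<le>m. P r s * Q (n - r) (m - s))"

definition qp2_one :: qpoly2 where
  "qp2_one = (\<lambda>n m. if n = 0 \<and> m = 0 then 1 else 0)"

definition q2_minus :: "quat \<Rightarrow> qpoly2" where
  "q2_minus b = (\<lambda>n m. if n = 0 \<and> m = 1 then 1 else if n = 0 \<and> m = 0 then - b else 0)"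

primrec q2_minus_pow :: "quat \<Rightarrow> nat \<Rightarrow> qpoly2" where
  "q2_minus_pow b 0 = qp2_one"
| "q2_minus_pow b (Suc k) = qp2_star (q2_minus b) (q2_minus_pow b k)"

definition cullen_q2 :: "qpoly2 \<Rightarrow> qpoly2" where
  "cullen_q2 P = (\<lambda>n m. of_nat (Suc m) * P n (Suc m))"

definition zero_multiplicity :: "qpoly2 \<Rightarrow> quat \<Rightarrow> nat \<Rightarrow> bool" where
  "zero_multiplicity P b k \<longleftrightarrow>
     (\<forall>x. qeval2 P x b = 0) \<and>
     (\<exists>S\<in>qpolys2. P = qp2_star (q2_minus_pow b k) S \<and> \<not> (\<forall>x. qeval2 S x b = 0))"

text \<open>Degree in \<open>q\<^sub>2\<close> and the coefficient polynomials \<open>P~_k(q\<^sub>1)\<close> in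
  \<open>P = \<Sum>_k q\<^sub>2^k * P~_k(q\<^sub>1)\<close>.\<close>
definition deg_q2 :: "qpoly2 \<Rightarrow> nat" where
  "deg_q2 P = Max (insert 0 {m. \<exists>n. P n m \<noteq> 0})"

definition coeff_q2 :: "qpoly2 \<Rightarrow> nat \<Rightarrow> qpoly" where
  "coeff_q2 P k = (\<lambda>n. P n k)"

text \<open>Sylvester matrix (0-based indices \<open>i, j < r + s\<close>).\<close>
definition sylvester_q2 :: "qpoly2 \<Rightarrow> qpoly2 \<Rightarrow> nat \<Rightarrow> nat \<Rightarrow> qpoly" where
  "sylvester_q2 P Q i j =
     (let r = deg_q2 P; s = deg_q2 Q in
      if j < s then (if j \<le> i \<and> i - j \<le> r then coeff_q2 P (i - j) else (\<lambda>_. 0))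
      else (let j' = j - s in
            if j' \<le> i \<and> i - j' \<le> s then coeff_q2 Q (i - j') else (\<lambda>_. 0)))"

text \<open>\<open>Res(P,Q;q\<^sub>2) \<equiv> 0\<close>: the Dieudonn\'e determinant of the Sylvester matrix vanishes,
  i.e. the Sylvester matrix is singular over the skew field of quotients \<open>\<L>\<close>.\<close>
definition res_q2_zero :: "(qpoly \<Rightarrow> 'L::division_ring) \<Rightarrow> qpoly2 \<Rightarrow> qpoly2 \<Rightarrow> bool" where
  "res_q2_zero \<phi> P Q \<longleftrightarrow>
     \<not> mat_invertible (deg_q2 P + deg_q2 Q) (\<lambda>i j. \<phi> (sylvester_q2 P Q i j))"

end

(* Since n >= 2, both P = (q2 - b)^{*n} * S and its Cullen derivative are left multiples
   of q2 - b, the latter by the Leibniz rule ((q2 - b) * X)_{q2} = X + (q2 - b) * X_{q2}.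
   For a left multiple F of q2 - b the telescoping sum  sum_m b^m F_m(q1)  vanishes, so the
   row (1, b, b^2, ...) annihilates the Sylvester matrix of P and P_{q2} from the left, and
   a matrix over a skew field with a nonzero left null vector is not invertible.  The matrix
   is not empty because deg_{q2} P = n + deg_{q2} S. *)

theory Submission
  imports Defs "HOL-Computational_Algebra.Formal_Power_Series"
begin

text \<open>Read as a power series in \<open>q\<^sub>2\<close> over \<open>\<bbbH>[[q\<^sub>1]]\<close>, \<open>qp2_star\<close> is the ordinary product;
  this gives associativity and the unit law for free.\<close>

definition fps_of_qpoly2 :: "qpoly2 \<Rightarrow> quat fps fps" where
  "fps_of_qpoly2 P = Abs_fps (\<lambda>m. Abs_fps (\<lambda>n. P n m))"

lemma fps_of_qpoly2_inject: "fps_of_qpoly2 P = fps_of_qpoly2 Q \<Longrightarrow> P = Q"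
  by (metis fps_of_qpoly2_def fps_nth_Abs_fps ext)

lemma fps_of_qpoly2_one: "fps_of_qpoly2 qp2_one = 1"
  by (intro fps_ext) (simp add: fps_of_qpoly2_def qp2_one_def fps_eq_iff)

lemma fps_of_qpoly2_star: "fps_of_qpoly2 (qp2_star P Q) = fps_of_qpoly2 P * fps_of_qpoly2 Q"
proof (intro fps_ext)
  fix m n
  have "(\<Sum>r\<le>n. \<Sum>s\<le>m. P r s * Q (n - r) (m - s)) = (\<Sum>s\<le>m. \<Sum>r\<le>n. P r s * Q (n - r) (m - s))"
    by (rule sum.swap)
  then show "fps_nth (fps_nth (fps_of_qpoly2 (qp2_star P Q)) m) n
      = fps_nth (fps_nth (fps_of_qpoly2 P * fps_of_qpoly2 Q) m) n"
    by (simp add: fps_of_qpoly2_def qp2_star_def fps_mult_nth fps_sum_nth atLeast0AtMost)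
qed

lemma qp2_star_assoc: "qp2_star (qp2_star P Q) R = qp2_star P (qp2_star Q R)"
  by (rule fps_of_qpoly2_inject) (simp add: fps_of_qpoly2_star mult.assoc)

lemma qp2_star_one_left: "qp2_star qp2_one P = P"
  by (rule fps_of_qpoly2_inject) (simp add: fps_of_qpoly2_star fps_of_qpoly2_one)

lemma qpolys2_if_support_subset:
  "finite A \<Longrightarrow> {(n, m). P n m \<noteq> 0} \<subseteq> A \<Longrightarrow> P \<in> qpolys2"
  unfolding qpolys2_def by (auto intro: finite_subset)

lemma qpolys2_star:
  assumes "P \<in> qpolys2" "Q \<in> qpolys2" shows "qp2_star P Q \<in> qpolys2"
proof -
  let ?add = "\<lambda>((r, s), (r', s')). (r + r', s + s')"
  have "{(n, m). qp2_star P Q n m \<noteq> 0} \<subseteq> ?add ` ({(n, m). P n m \<noteq> 0} \<times> {(n, m). Q n m \<noteq> 0})"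
  proof clarify
    fix n m assume "qp2_star P Q n m \<noteq> 0"
    then obtain r s where "r \<le> n" "s \<le> m" "P r s * Q (n - r) (m - s) \<noteq> 0"
      unfolding qp2_star_def by (metis (no_types, lifting) atMost_iff sum.neutral)
    then show "(n, m) \<in> ?add ` ({(n, m). P n m \<noteq> 0} \<times> {(n, m). Q n m \<noteq> 0})"
      by (intro image_eqI[where x = "((r, s), (n - r, m - s))"]) auto
  qed
  then show ?thesis
    by (rule qpolys2_if_support_subset[rotated]) (use assms in \<open>simp add: qpolys2_def\<close>)
qed

lemma qpolys2_add: "P \<in> qpolys2 \<Longrightarrow> Q \<in> qpolys2 \<Longrightarrow> (\<lambda>n m. P n m + Q n m) \<in> qpolys2"
  by (rule qpolys2_if_support_subset[of "{(n, m). P n m \<noteq> 0} \<union> {(n, m). Q n m \<noteq> 0}"])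
    (auto simp: qpolys2_def)

lemma qpolys2_cullen_q2:
  assumes "P \<in> qpolys2" shows "cullen_q2 P \<in> qpolys2"
proof -
  have "{(n, m). cullen_q2 P n m \<noteq> 0} \<subseteq> (\<lambda>(n, m). (n, m - 1)) ` {(n, m). P n m \<noteq> 0}"
  proof clarify
    fix n m assume "cullen_q2 P n m \<noteq> 0"
    then have "P n (Suc m) \<noteq> 0" by (auto simp: cullen_q2_def)
    then show "(n, m) \<in> (\<lambda>(n, m). (n, m - 1)) ` {(n, m). P n m \<noteq> 0}"
      by (intro image_eqI[where x = "(n, Suc m)"]) auto
  qed
  then show ?thesis
    by (rule qpolys2_if_support_subset[rotated]) (use assms in \<open>simp add: qpolys2_def\<close>)
qed

lemma qpolys2_q2_minus: "q2_minus b \<in> qpolys2"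
  by (rule qpolys2_if_support_subset[of "{(0, 0), (0, 1)}"]) (auto simp: q2_minus_def split: if_splits)

lemma qpolys2_qp2_one: "qp2_one \<in> qpolys2"
  by (rule qpolys2_if_support_subset[of "{(0, 0)}"]) (auto simp: qp2_one_def split: if_splits)

lemma qpolys2_q2_minus_pow: "q2_minus_pow b k \<in> qpolys2"
  by (induction k) (auto intro: qpolys2_star qpolys2_q2_minus qpolys2_qp2_one)

lemma finite_q2_exponents: "P \<in> qpolys2 \<Longrightarrow> finite {m. \<exists>n. P n m \<noteq> 0}"
proof -
  assume "P \<in> qpolys2"
  moreover have "{m. \<exists>n. P n m \<noteq> 0} = snd ` {(n, m). P n m \<noteq> 0}" by force
  ultimately show ?thesis by (simp add: qpolys2_def)
qed

lemma le_deg_q2: "P \<in> qpolys2 \<Longrightarrow> P n m \<noteq> 0 \<Longrightarrow> m \<le> deg_q2 P"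
  unfolding deg_q2_def by (rule Max_ge) (auto simp: finite_q2_exponents)

lemma coeff_above_deg_q2: "P \<in> qpolys2 \<Longrightarrow> deg_q2 P < m \<Longrightarrow> P n m = 0"
  using le_deg_q2 by fastforce

lemma deg_q2_le: "P \<in> qpolys2 \<Longrightarrow> (\<And>n m. P n m \<noteq> 0 \<Longrightarrow> m \<le> d) \<Longrightarrow> deg_q2 P \<le> d"
  unfolding deg_q2_def by (rule Max.boundedI) (auto simp: finite_q2_exponents)

lemma deg_q2_coeff_nonzero:
  assumes "P \<in> qpolys2" "P \<noteq> (\<lambda>_ _. 0)" obtains n where "P n (deg_q2 P) \<noteq> 0"
proof -
  have ne: "{m. \<exists>n. P n m \<noteq> 0} \<noteq> {}" using assms(2) by (metis (mono_tags) Collect_empty_eq)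
  have "deg_q2 P = Max {m. \<exists>n. P n m \<noteq> 0}"
    unfolding deg_q2_def using finite_q2_exponents[OF assms(1)] ne
    by (simp add: max_def)
  also have "\<dots> \<in> {m. \<exists>n. P n m \<noteq> 0}"
    using finite_q2_exponents[OF assms(1)] ne by (rule Max_in)
  finally show ?thesis using that by blast
qed

lemma deg_q2_zero: "deg_q2 (\<lambda>_ _. 0) = 0"
  by (simp add: deg_q2_def)

section \<open>Left multiples of \<open>q\<^sub>2 - b\<close>\<close>

lemma q2_minus_star_apply:
  "qp2_star (q2_minus b) X n m = (if m = 0 then 0 else X n (m - 1)) - b * X n m"
proof -
  have "q2_minus b r s * X (n - r) (m - s)
      = (if r = 0 then (if s = 1 then X n (m - s) else 0) + (if s = 0 then - b * X n (m - s) else 0)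
         else 0)" for r s
    by (simp add: q2_minus_def)
  then have "qp2_star (q2_minus b) X n m
      = (\<Sum>s\<le>m. (if s = 1 then X n (m - s) else 0) + (if s = 0 then - b * X n (m - s) else 0))"
    unfolding qp2_star_def by (simp add: sum.atMost_shift)
  also have "\<dots> = (if m = 0 then 0 else X n (m - 1)) - b * X n m"
    by (cases m) (simp_all add: sum.distrib sum.delta)
  finally show ?thesis .
qed

lemma deg_q2_q2_minus_star:
  assumes "X \<in> qpolys2" "X \<noteq> (\<lambda>_ _. 0)"
  shows "deg_q2 (qp2_star (q2_minus b) X) = Suc (deg_q2 X)"
proof (rule antisym)
  have "qp2_star (q2_minus b) X \<in> qpolys2"
    using assms(1) by (intro qpolys2_star qpolys2_q2_minus)
  then show "deg_q2 (qp2_star (q2_minus b) X) \<le> Suc (deg_q2 X)"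
  proof (rule deg_q2_le)
    fix n m assume "qp2_star (q2_minus b) X n m \<noteq> 0"
    then have "0 < m \<and> X n (m - 1) \<noteq> 0 \<or> X n m \<noteq> 0"
      by (auto simp: q2_minus_star_apply split: if_splits)
    then show "m \<le> Suc (deg_q2 X)"
      using le_deg_q2[OF assms(1)] by fastforce
  qed
  obtain n where "X n (deg_q2 X) \<noteq> 0" using assms by (rule deg_q2_coeff_nonzero)
  then have "qp2_star (q2_minus b) X n (Suc (deg_q2 X)) \<noteq> 0"
    using coeff_above_deg_q2[OF assms(1)] by (simp add: q2_minus_star_apply)
  then show "Suc (deg_q2 X) \<le> deg_q2 (qp2_star (q2_minus b) X)"
    using \<open>qp2_star (q2_minus b) X \<in> qpolys2\<close> by (rule le_deg_q2[rotated])
qed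

lemma q2_minus_pow_Suc_star:
  "qp2_star (q2_minus_pow b (Suc k)) S = qp2_star (q2_minus b) (qp2_star (q2_minus_pow b k) S)"
  by (simp add: qp2_star_assoc)

lemma deg_q2_q2_minus_pow_star:
  assumes "S \<in> qpolys2" "S \<noteq> (\<lambda>_ _. 0)"
  shows "deg_q2 (qp2_star (q2_minus_pow b k) S) = k + deg_q2 S"
proof -
  have "qp2_star (q2_minus_pow b k) S \<noteq> (\<lambda>_ _. 0) \<and> deg_q2 (qp2_star (q2_minus_pow b k) S) = k + deg_q2 S"
  proof (induction k)
    case 0
    then show ?case using assms(2) by (simp add: qp2_star_one_left)
  next
    case (Suc k)
    have "qp2_star (q2_minus_pow b k) S \<in> qpolys2"
      using assms(1) by (intro qpolys2_star qpolys2_q2_minus_pow)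
    then have "deg_q2 (qp2_star (q2_minus_pow b (Suc k)) S) = Suc k + deg_q2 S"
      using Suc.IH unfolding q2_minus_pow_Suc_star by (simp add: deg_q2_q2_minus_star)
    moreover have "qp2_star (q2_minus_pow b (Suc k)) S \<noteq> (\<lambda>_ _. 0)"
      using calculation deg_q2_zero by fastforce
    ultimately show ?case by blast
  qed
  then show ?thesis ..
qed

lemma cullen_q2_q2_minus_star:
  "cullen_q2 (qp2_star (q2_minus b) X) = (\<lambda>n m. X n m + qp2_star (q2_minus b) (cullen_q2 X) n m)"
proof (intro ext)
  fix n m
  have "of_nat (Suc m) * (b * X n (Suc m)) = b * (of_nat (Suc m) * X n (Suc m))" for m
    by (metis mult.assoc mult_of_nat_commute)
  then show "cullen_q2 (qp2_star (q2_minus b) X) n m = X n m + qp2_star (q2_minus b) (cullen_q2 X) n m"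
    by (cases m) (simp_all add: q2_minus_star_apply cullen_q2_def algebra_simps)
qed

lemma q2_minus_star_add:
  "qp2_star (q2_minus b) (\<lambda>n m. X n m + Y n m)
    = (\<lambda>n m. qp2_star (q2_minus b) X n m + qp2_star (q2_minus b) Y n m)"
  by (intro ext) (simp add: q2_minus_star_apply algebra_simps)

lemma cullen_q2_q2_minus_pow_star:
  assumes "S \<in> qpolys2" "2 \<le> k"
  obtains X where "X \<in> qpolys2" "cullen_q2 (qp2_star (q2_minus_pow b k) S) = qp2_star (q2_minus b) X"
proof -
  obtain j where k: "k = Suc (Suc j)" using assms(2) by (metis add_2_eq_Suc le_Suc_ex)
  define G where "G = qp2_star (q2_minus_pow b j) S"
  define H where "H = qp2_star (q2_minus b) G"
  have "G \<in> qpolys2" unfolding G_def using assms(1) by (intro qpolys2_star qpolys2_q2_minus_pow)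
  then have "(\<lambda>n m. G n m + cullen_q2 H n m) \<in> qpolys2"
    unfolding H_def by (intro qpolys2_add qpolys2_cullen_q2 qpolys2_star qpolys2_q2_minus)
  moreover have "cullen_q2 (qp2_star (q2_minus_pow b k) S) = qp2_star (q2_minus b) (\<lambda>n m. G n m + cullen_q2 H n m)"
    unfolding k q2_minus_pow_Suc_star G_def[symmetric] H_def[symmetric]
    by (simp add: cullen_q2_q2_minus_star q2_minus_star_add H_def)
  ultimately show ?thesis by (rule that)
qed

text \<open>The coefficients in \<open>q\<^sub>1\<close> of the restriction \<open>q\<^sub>1 \<mapsto> P(q\<^sub>1, b)\<close>: as in \<open>qeval2\<close>, the
  powers of \<open>b\<close> stand to the left of the coefficients.\<close>

definition restrict_q2 :: "quat \<Rightarrow> qpoly2 \<Rightarrow> qpoly" where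
  "restrict_q2 b P = (\<lambda>n. \<Sum>m\<le>deg_q2 P. b ^ m * P n m)"

lemma sum_power_q2_minus_star:
  "(\<Sum>m\<le>d. b ^ m * qp2_star (q2_minus b) X n m) = - (b ^ Suc d * X n d)"
proof (induction d)
  case 0
  then show ?case by (simp add: q2_minus_star_apply)
next
  case (Suc d)
  then show ?case
    by (simp add: q2_minus_star_apply algebra_simps power_Suc2[of b "Suc d"] del: power_Suc)
qed

lemma restrict_q2_q2_minus_star:
  assumes "X \<in> qpolys2" shows "restrict_q2 b (qp2_star (q2_minus b) X) = (\<lambda>_. 0)"
proof
  fix n
  have "X n (deg_q2 (qp2_star (q2_minus b) X)) = 0"
  proof (cases "X = (\<lambda>_ _. 0)")
    case False
    then show ?thesis by (simp add: deg_q2_q2_minus_star coeff_above_deg_q2 assms)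
  qed simp
  then show "restrict_q2 b (qp2_star (q2_minus b) X) n = 0"
    by (simp add: restrict_q2_def sum_power_q2_minus_star)
qed

section \<open>A left null vector of the Sylvester matrix\<close>

lemma sum_lessThan_window:
  fixes j r N :: nat
  assumes "j + r < N"
  shows "(\<Sum>i<N. if j \<le> i \<and> i - j \<le> r then g i else 0) = (\<Sum>t\<le>r. g (j + t))"
proof -
  have "(\<Sum>i<N. if j \<le> i \<and> i - j \<le> r then g i else 0)
      = sum g {i \<in> {..<N}. j \<le> i \<and> i - j \<le> r}"
    by (rule sum.inter_filter[symmetric]) simp
  also have "{i \<in> {..<N}. j \<le> i \<and> i - j \<le> r} = {j..j + r}"
    using assms by auto
  also have "sum g {j..j + r} = (\<Sum>t\<le>r. g (j + t))"
    using sum.shift_bounds_cl_nat_ivl[of g 0 j r] by (simp add: atLeast0AtMost add.commute)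
  finally show ?thesis .
qed

lemma sylvester_q2_left_null:
  assumes "restrict_q2 b P = (\<lambda>_. 0)" "restrict_q2 b Q = (\<lambda>_. 0)" "j < deg_q2 P + deg_q2 Q"
  shows "(\<lambda>n. \<Sum>i<deg_q2 P + deg_q2 Q. b ^ i * sylvester_q2 P Q i j n) = (\<lambda>_. 0)"
proof
  fix n
  let ?N = "deg_q2 P + deg_q2 Q"
  have window: "(\<Sum>i<?N. b ^ i * (if j' \<le> i \<and> i - j' \<le> deg_q2 F then F n (i - j') else 0)) = 0"
    if "restrict_q2 b F = (\<lambda>_. 0)" "j' + deg_q2 F < ?N" for F j'
  proof -
    have "(\<Sum>i<?N. b ^ i * (if j' \<le> i \<and> i - j' \<le> deg_q2 F then F n (i - j') else 0))
        = (\<Sum>i<?N. if j' \<le> i \<and> i - j' \<le> deg_q2 F then b ^ i * F n (i - j') else 0)"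
      by (intro sum.cong) auto
    also have "\<dots> = b ^ j' * restrict_q2 b F n"
      using that(2) by (simp add: sum_lessThan_window restrict_q2_def sum_distrib_left power_add mult.assoc)
    finally show ?thesis using that(1) by simp
  qed
  show "(\<Sum>i<?N. b ^ i * sylvester_q2 P Q i j n) = 0"
  proof (cases "j < deg_q2 Q")
    case True
    then show ?thesis
      using window[OF assms(1), of j]
      by (simp add: sylvester_q2_def coeff_q2_def Let_def if_distrib[where f = "\<lambda>p. p n"] cong: if_cong)
  next
    case False
    then show ?thesis
      using window[OF assms(2), of "j - deg_q2 Q"] assms(3)
      by (simp add: sylvester_q2_def coeff_q2_def Let_def if_distrib[where f = "\<lambda>p. p n"] cong: if_cong)
  qed
qed

lemma not_mat_invertible_if_left_null:
  fixes M :: "nat \<Rightarrow> nat \<Rightarrow> 'a::ring_1"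
  assumes null: "\<And>j. j < N \<Longrightarrow> (\<Sum>i<N. y i * M i j) = 0" and "r < N" "y r \<noteq> 0"
  shows "\<not> mat_invertible N M"
proof
  assume "mat_invertible N M"
  then obtain C where C: "\<And>i k. i < N \<Longrightarrow> k < N \<Longrightarrow> (\<Sum>j<N. M i j * C j k) = (if i = k then 1 else 0)"
    unfolding mat_invertible_def by blast
  have "y r = (\<Sum>i<N. y i * (if i = r then 1 else 0))"
    using \<open>r < N\<close> by (simp add: if_distrib sum.delta cong: if_cong)
  also have "\<dots> = (\<Sum>i<N. y i * (\<Sum>j<N. M i j * C j r))"
    using C \<open>r < N\<close> by simp
  also have "\<dots> = (\<Sum>j<N. (\<Sum>i<N. y i * M i j) * C j r)"
    by (simp add: sum_distrib_left sum_distrib_right mult.assoc) (rule sum.swap)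
  also have "\<dots> = 0"
    using null by simp
  finally show False using \<open>y r \<noteq> 0\<close> by contradiction
qed

section \<open>The resultant over the skew field of quotients\<close>

definition qp_const :: "quat \<Rightarrow> qpoly" where
  "qp_const c = (\<lambda>n. if n = 0 then c else 0)"

lemma qp_star_qp_const: "qp_star (qp_const c) f = (\<lambda>n. c * f n)"
proof
  fix n
  have "qp_star (qp_const c) f n = (\<Sum>k\<le>n. if k = 0 then c * f n else 0)"
    unfolding qp_star_def qp_const_def by (intro sum.cong) auto
  then show "qp_star (qp_const c) f n = c * f n" by simp
qed

lemma qpolys_if_support_subset: "finite A \<Longrightarrow> {n. f n \<noteq> 0} \<subseteq> A \<Longrightarrow> f \<in> qpolys"
  unfolding qpolys_def by (auto intro: finite_subset)

lemma qpolys_zero: "(\<lambda>_. 0) \<in> qpolys"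
  by (simp add: qpolys_def)

lemma qpolys_qp_const: "qp_const c \<in> qpolys"
  by (rule qpolys_if_support_subset[of "{0}"]) (auto simp: qp_const_def)

lemma qpolys_scale: "f \<in> qpolys \<Longrightarrow> (\<lambda>n. c * f n) \<in> qpolys"
  by (rule qpolys_if_support_subset[of "{n. f n \<noteq> 0}"]) (auto simp: qpolys_def)

lemma qpolys_sum: "finite I \<Longrightarrow> (\<And>i. i \<in> I \<Longrightarrow> F i \<in> qpolys) \<Longrightarrow> (\<lambda>n. \<Sum>i\<in>I. F i n) \<in> qpolys"
  by (rule qpolys_if_support_subset[of "\<Union>i\<in>I. {n. F i n \<noteq> 0}"])
    (auto simp: qpolys_def intro: sum.neutral)

lemma qpolys_coeff_q2: "P \<in> qpolys2 \<Longrightarrow> coeff_q2 P m \<in> qpolys"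
  by (rule qpolys_if_support_subset[of "fst ` {(n, m). P n m \<noteq> 0}"])
    (auto simp: qpolys2_def coeff_q2_def image_iff)

lemma qpolys_sylvester_q2: "P \<in> qpolys2 \<Longrightarrow> Q \<in> qpolys2 \<Longrightarrow> sylvester_q2 P Q i j \<in> qpolys"
  by (simp add: sylvester_q2_def Let_def qpolys_coeff_q2 qpolys_zero)

context
  fixes \<phi> :: "qpoly \<Rightarrow> 'L::division_ring"
  assumes \<phi>: "is_quotient_skew_field \<phi>"
begin

lemma quotient_add: "f \<in> qpolys \<Longrightarrow> g \<in> qpolys \<Longrightarrow> \<phi> (qp_add f g) = \<phi> f + \<phi> g"
  using \<phi> by (simp add: is_quotient_skew_field_def)

lemma quotient_star: "f \<in> qpolys \<Longrightarrow> g \<in> qpolys \<Longrightarrow> \<phi> (qp_star f g) = \<phi> f * \<phi> g"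
  using \<phi> by (simp add: is_quotient_skew_field_def)

lemma quotient_zero: "\<phi> (\<lambda>_. 0) = 0"
  using quotient_add[OF qpolys_zero qpolys_zero] by (simp add: qp_add_def)

lemma quotient_qp_const_one: "\<phi> (qp_const 1) = 1"
  using \<phi> by (simp add: is_quotient_skew_field_def qp_one_def qp_const_def)

lemma quotient_scale: "f \<in> qpolys \<Longrightarrow> \<phi> (\<lambda>n. c * f n) = \<phi> (qp_const c) * \<phi> f"
  by (simp add: quotient_star[symmetric] qpolys_qp_const qp_star_qp_const)

lemma quotient_sum:
  "finite I \<Longrightarrow> (\<And>i. i \<in> I \<Longrightarrow> F i \<in> qpolys) \<Longrightarrow> \<phi> (\<lambda>n. \<Sum>i\<in>I. F i n) = (\<Sum>i\<in>I. \<phi> (F i))"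
proof (induction I rule: finite_induct)
  case empty
  then show ?case by (simp add: quotient_zero)
next
  case (insert i I)
  have "(\<lambda>n. \<Sum>i\<in>I. F i n) \<in> qpolys"
    using insert by (intro qpolys_sum) auto
  then have "\<phi> (qp_add (F i) (\<lambda>n. \<Sum>i\<in>I. F i n)) = \<phi> (F i) + \<phi> (\<lambda>n. \<Sum>i\<in>I. F i n)"
    using insert.prems by (simp add: quotient_add)
  then show ?case
    using insert by (simp add: qp_add_def)
qed

lemma res_q2_zero_if_restrict_q2_zero:
  assumes "P \<in> qpolys2" "Q \<in> qpolys2" "0 < deg_q2 P + deg_q2 Q"
    and "restrict_q2 b P = (\<lambda>_. 0)" "restrict_q2 b Q = (\<lambda>_. 0)"
  shows "res_q2_zero \<phi> P Q"
proof -
  let ?N = "deg_q2 P + deg_q2 Q"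
  define y where "y i = \<phi> (qp_const (b ^ i))" for i
  have "(\<Sum>i<?N. y i * \<phi> (sylvester_q2 P Q i j)) = 0" if "j < ?N" for j
  proof -
    have "(\<Sum>i<?N. y i * \<phi> (sylvester_q2 P Q i j)) = (\<Sum>i<?N. \<phi> (\<lambda>n. b ^ i * sylvester_q2 P Q i j n))"
      using assms(1,2) by (simp add: y_def quotient_scale qpolys_sylvester_q2)
    also have "\<dots> = \<phi> (\<lambda>n. \<Sum>i<?N. b ^ i * sylvester_q2 P Q i j n)"
      using assms(1,2) by (simp add: quotient_sum qpolys_scale qpolys_sylvester_q2)
    also have "\<dots> = 0"
      using sylvester_q2_left_null[OF assms(4,5) that] by (simp add: quotient_zero)
    finally show ?thesis .
  qed
  moreover have "y 0 \<noteq> 0"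
    by (simp add: y_def quotient_qp_const_one)
  ultimately show ?thesis
    unfolding res_q2_zero_def using assms(3) by (intro not_mat_invertible_if_left_null[where r = 0]) simp_all
qed

end

theorem proposition4p12:
  fixes a b :: quat and P :: qpoly2 and n :: nat and \<phi> :: "qpoly \<Rightarrow> 'L::division_ring"
  assumes "is_quotient_skew_field \<phi>"
    and "b \<in> centralizer a"
    and "P \<in> qpolys2"
    and "qeval2 P a b = 0"
    and "zero_multiplicity P b n"
    and "n \<ge> 2"
  shows "res_q2_zero \<phi> P (cullen_q2 P)"
proof -
  obtain S where S: "S \<in> qpolys2" "P = qp2_star (q2_minus_pow b n) S" "\<not> (\<forall>x. qeval2 S x b = 0)"
    using assms(5) unfolding zero_multiplicity_def by blast
  have "S \<noteq> (\<lambda>_ _. 0)"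
    using S(3) by (auto simp: qeval2_def)
  then have deg_P: "deg_q2 P = n + deg_q2 S"
    using S(1,2) by (simp add: deg_q2_q2_minus_pow_star)
  obtain m where n: "n = Suc m"
    using assms(6) by (cases n) auto
  have P_root: "restrict_q2 b P = (\<lambda>_. 0)"
    unfolding S(2) n q2_minus_pow_Suc_star
    by (intro restrict_q2_q2_minus_star qpolys2_star qpolys2_q2_minus_pow S(1))
  obtain X where "X \<in> qpolys2" "cullen_q2 P = qp2_star (q2_minus b) X"
    using cullen_q2_q2_minus_pow_star[OF S(1) assms(6)] S(2) by metis
  then have Q_root: "restrict_q2 b (cullen_q2 P) = (\<lambda>_. 0)"
    by (simp add: restrict_q2_q2_minus_star)
  show ?thesis
    using assms(1,3) qpolys2_cullen_q2[OF assms(3)] deg_P n P_root Q_root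
    by (intro res_q2_zero_if_restrict_q2_zero) simp_all
qed

end
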